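(* The extremal edges of the reduced Schubert system $\overline\Sigma$ satisfy: (1) every vertex $(v,t,s)$ of $\overline\Sigma$ is an end vertex of at most two extremal edges; (2) if $\beta\subset\mathcal B$ is such that the $\beta$-state $\Sigma_\beta$ is not contradictory, $\{(v,t,s),(i,j)\}$ is an extremal edge of $\overline\Sigma$, and $(v,t,s)$ is a vertex of $\Sigma_\beta$ (i.e. $\beta$-relevant), then $i\notin\beta$ and $j\in\beta$.
   Context: Let $Q$ be a quiver with finite $Q_0,Q_1$, $M$ a finite-dimensional complex representation with ordered basis $\mathcal B=\bigcup_p\mathcal B_p$ (bases of $M_p$, total order on $\mathcal B$); $M_v(i)=\sum_j\mu_{v,i,j}j$ for $v:p\to q$, $i\in\mathcal B_p$; coefficient quiver $\Gamma$ with vertices $\mathcal B$, arrows $(v,i,j)$ from $i$ to $j$ with $\mu_{v,i,j}\ne0$; natural $F:\Gamma\to Q$. An arrow $(v,s,t)$ of $\Gamma$ is extremal if for all arrows $(v,s',t')\ne(v,s,t)$ of $\Gamma$, $s<s'$ or $t'<t$. $\mathrm{Rel}^2=\{(i,j):F(i)=F(j),i\le j\}$; $\mathrm{Rel}^3$ = triples $(v,t,s)$ ($v:p\to q$, $s\in F^{-1}(p)$, $t\in F^{-1}(q)$) with some $(v,s',t')\in\Gamma_1$, $s\ge s'$, $t\le t'$. Complete Schubert system $\Sigma$: with $E(v,t,s)=\sum_{(v,s',t')\in\Gamma_1}\mu_{v,s',t'}w_{t,t'}w_{s',s}-\sum_{(v,s',t)\in\Gamma_1}\mu_{v,s',t}w_{s',s}$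 regarded as a polynomial in $w_{i,j}$, $(i,j)\in\mathrm{Rel}^2$ (others set to $0$), $\Sigma$ is the graph on $\mathrm{Rel}^2\sqcup\mathrm{Rel}^3$ with edge $\{(i,j),(v,t,s)\}$ iff $w_{i,j}$ occurs in $E(v,t,s)$ and links $\lambda=((v,t,s),S)$ whenever $\prod_Sw_{i,j}$ occurs with nonzero coefficient $\mu_\lambda$. Partial evaluations: partial $\mathrm{ev}:\mathrm{Rel}^2\dashrightarrow\mathbb C$ such that for each triple and each neighbour $(k,l)$, if all other neighbours are in the domain then so is $(k,l)$ and $\sum_\lambda\mu_\lambda\prod_S\mathrm{ev}=0$. $f_\beta(i,j)=1$ if $i=j\in\beta$, $0$ if $i\in\beta,i\ne j$, $0$ if $j\notin\beta$, undefined otherwise; $\Sigma_\beta$ is contradictory if no partial evaluation extends $f_\beta$, otherwise $\mathrm{ev}_\beta$ is the unique minimal one and $\Sigma_\beta$ is defined as follows: for $\lambda=((v,t,s),S)$ let $\mu_{\beta,\lambda}=\sum\mu_{\lambda'}\prod_{S'\cap\mathrm{dom}\,\mathrm{ev}_\beta}\mathrm{ev}_\beta$ over links $\lambda'=((v,t,s),S')$ of $\Sigma$ with $S'\setminus\mathrm{dom}\,\mathrm{ev}_\beta=S$; the vertices of $\Sigma_\beta$ are the pairs outside $\mathrm{dom}\,\mathrm{ev}_\beta$ and the triples $\tau$ for which some $\mu_{\beta,(\tau,S)}\ne0$. Reduced Schubert system $\overline\Sigma$: for $(v,t,s)\in\mathrm{Rel}^3$ let $\overline E(v,t,s)=\sum_{(v,s,t')\in\Gamma_1,t<t'}\mu_{v,s,t'}w_{t,t'}+\sum_{(v,s',t')\in\Gamma_1,t<t',s'<s}\mu_{v,s',t'}w_{t,t'}w_{s',s}-\sum_{(v,s',t)\in\Gamma_1,s'<s}\mu_{v,s',t}w_{s',s}-\mu_{v,s,t}$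 ($\mu_{v,s,t}=0$ if no such arrow). $\overline\Sigma$ has vertices $\{(i,j)\in\mathrm{Rel}^2:i<j\}\sqcup\{(v,t,s)\in\mathrm{Rel}^3:(v,s,t)\text{ not an extremal arrow}\}$, edges $\{(v,t,s),(i,j)\}$ iff $w_{i,j}$ occurs in $\overline E(v,t,s)$, and links $((v,t,s),S)$ for each monomial $\prod_Sw_{i,j}$ occurring in $\overline E(v,t,s)$ with nonzero coefficient. An edge $\{(v,t,s),(i,j)\}$ of $\overline\Sigma$ is simply linked if $((v,t,s),\{(i,j)\})$ is a link and the edge is a leg of no other link; it is extremal if it is simply linked and either $j=s$ and $(v,i,t)$ is an extremal arrow of $\Gamma$, or $i=t$ and $(v,s,j)$ is an extremal arrow of $\Gamma$. *)

theory Defs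
  imports Complex_Main "HOL-Library.Multiset"
begin

text \<open>A quiver Q = (Q0, Q1, src, tgt) together with a finite-dimensional complex
representation M given through an ordered basis: basis is the (finite) union of
the bases B_p of the spaces M_p, vtx i = p means i is in B_p, and
coef v i j = mu_{v,i,j} are the matrix coefficients M_v(i) = sum_j mu_{v,i,j} j.
The total order on the basis is the order of the type 'b.\<close>

record ('q, 'a, 'b) repdata =
  Q0 :: "'q set"
  Q1 :: "'a set"
  src :: "'a \<Rightarrow> 'q"
  tgt :: "'a \<Rightarrow> 'q"
  basis :: "'b set"
  vtx :: "'b \<Rightarrow> 'q"
  coef :: "'a \<Rightarrow> 'b \<Rightarrow> 'b \<Rightarrow> complex"

definition wf_rep :: "('q, 'a, 'b) repdata \<Rightarrow> bool" where
  "wf_rep M \<longleftrightarrow> finite (Q0 M) \<and> finite (Q1 M) \<and> src M ` Q1 M \<subseteq> Q0 M \<and>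
     tgt M ` Q1 M \<subseteq> Q0 M \<and> finite (basis M) \<and> vtx M ` basis M \<subseteq> Q0 M"

definition garrow :: "('q, 'a, 'b) repdata \<Rightarrow> 'a \<Rightarrow> 'b \<Rightarrow> 'b \<Rightarrow> bool" where
  "garrow M v i j \<longleftrightarrow> v \<in> Q1 M \<and> i \<in> basis M \<and> j \<in> basis M \<and>
     vtx M i = src M v \<and> vtx M j = tgt M v \<and> coef M v i j \<noteq> 0"

definition extremal_arrow :: "('q, 'a, 'b::linorder) repdata \<Rightarrow> 'a \<Rightarrow> 'b \<Rightarrow> 'b \<Rightarrow> bool" where
  "extremal_arrow M v s t \<longleftrightarrow> garrow M v s t \<and>
     (\<forall>s' t'. garrow M v s' t' \<and> (s', t') \<noteq> (s, t) \<longrightarrow> s < s' \<or> t' < t)"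

definition Rel2 :: "('q, 'a, 'b::linorder) repdata \<Rightarrow> ('b \<times> 'b) set" where
  "Rel2 M = {(i, j). i \<in> basis M \<and> j \<in> basis M \<and> vtx M i = vtx M j \<and> i \<le> j}"

definition Rel3 :: "('q, 'a, 'b::linorder) repdata \<Rightarrow> ('a \<times> 'b \<times> 'b) set" where
  "Rel3 M = {(v, t, s). v \<in> Q1 M \<and> s \<in> basis M \<and> vtx M s = src M v \<and>
      t \<in> basis M \<and> vtx M t = tgt M v \<and> (\<exists>s' t'. garrow M v s' t' \<and> s' \<le> s \<and> t \<le> t')}"

text \<open>Polynomials in the variables w_{i,j} are represented by their coefficient
functions on monomials, a monomial being a finite multiset of variables.
coeffE M tau m is the coefficient of the monomial m in E(tau), after setting the
variables outside Rel2 to 0.\<close>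
definition coeffE :: "('q, 'a, 'b::linorder) repdata \<Rightarrow> 'a \<times> 'b \<times> 'b \<Rightarrow> ('b \<times> 'b) multiset \<Rightarrow> complex" where
  "coeffE M \<tau> m = (case \<tau> of (v, t, s) \<Rightarrow>
     (\<Sum>(s', t') \<in> {(s', t'). garrow M v s' t' \<and> (t, t') \<in> Rel2 M \<and> (s', s) \<in> Rel2 M \<and>
                          m = {#(t, t'), (s', s)#}}. coef M v s' t')
   - (\<Sum>s' \<in> {s'. garrow M v s' t \<and> (s', s) \<in> Rel2 M \<and> m = {#(s', s)#}}. coef M v s' t))"

definition monsE :: "('q, 'a, 'b::linorder) repdata \<Rightarrow> 'a \<times> 'b \<times> 'b \<Rightarrow> ('b \<times> 'b) multiset set" where
  "monsE M \<tau> = {m. coeffE M \<tau> m \<noteq> 0}"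

text \<open>Edges of the complete Schubert system Sigma; its links are the pairs (tau, S) with S in monsE M tau.\<close>
definition sig_edge :: "('q, 'a, 'b::linorder) repdata \<Rightarrow> 'a \<times> 'b \<times> 'b \<Rightarrow> 'b \<times> 'b \<Rightarrow> bool" where
  "sig_edge M \<tau> p \<longleftrightarrow> \<tau> \<in> Rel3 M \<and> p \<in> Rel2 M \<and> (\<exists>m \<in> monsE M \<tau>. p \<in># m)"

definition eval_mon :: "('b \<times> 'b \<rightharpoonup> complex) \<Rightarrow> ('b \<times> 'b) multiset \<Rightarrow> complex" where
  "eval_mon ev m = prod_mset (image_mset (\<lambda>x. the (ev x)) m)"

definition evalE :: "('q, 'a, 'b::linorder) repdata \<Rightarrow> 'a \<times> 'b \<times> 'b \<Rightarrow> ('b \<times> 'b \<rightharpoonup> complex) \<Rightarrow> complex" where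
  "evalE M \<tau> ev = (\<Sum>m \<in> monsE M \<tau>. coeffE M \<tau> m * eval_mon ev m)"

definition is_pe :: "('q, 'a, 'b::linorder) repdata \<Rightarrow> ('b \<times> 'b \<rightharpoonup> complex) \<Rightarrow> bool" where
  "is_pe M ev \<longleftrightarrow> dom ev \<subseteq> Rel2 M \<and>
     (\<forall>\<tau> \<in> Rel3 M. \<forall>p. sig_edge M \<tau> p \<longrightarrow>
        (\<forall>p'. sig_edge M \<tau> p' \<and> p' \<noteq> p \<longrightarrow> p' \<in> dom ev) \<longrightarrow>
        p \<in> dom ev \<and> evalE M \<tau> ev = 0)"

definition fbeta :: "('q, 'a, 'b::linorder) repdata \<Rightarrow> 'b set \<Rightarrow> 'b \<times> 'b \<rightharpoonup> complex" where
  "fbeta M \<beta> p = (case p of (i, j) \<Rightarrow>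
     if (i, j) \<notin> Rel2 M then None
     else if i = j \<and> i \<in> \<beta> then Some 1
     else if i \<in> \<beta> then Some 0
     else if j \<notin> \<beta> then Some 0
     else None)"

definition contradictory :: "('q, 'a, 'b::linorder) repdata \<Rightarrow> 'b set \<Rightarrow> bool" where
  "contradictory M \<beta> \<longleftrightarrow> \<not> (\<exists>ev. is_pe M ev \<and> fbeta M \<beta> \<subseteq>\<^sub>m ev)"

definition min_pe :: "('q, 'a, 'b::linorder) repdata \<Rightarrow> 'b set \<Rightarrow> ('b \<times> 'b \<rightharpoonup> complex) \<Rightarrow> bool" where
  "min_pe M \<beta> ev \<longleftrightarrow> is_pe M ev \<and> fbeta M \<beta> \<subseteq>\<^sub>m ev \<and>
     (\<forall>ev'. is_pe M ev' \<and> fbeta M \<beta> \<subseteq>\<^sub>m ev' \<longrightarrow> ev \<subseteq>\<^sub>m ev')"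

definition mu_beta :: "('q, 'a, 'b::linorder) repdata \<Rightarrow> ('b \<times> 'b \<rightharpoonup> complex) \<Rightarrow> 'a \<times> 'b \<times> 'b \<Rightarrow> ('b \<times> 'b) multiset \<Rightarrow> complex" where
  "mu_beta M ev \<tau> S = (\<Sum>S' \<in> {S' \<in> monsE M \<tau>. filter_mset (\<lambda>x. x \<notin> dom ev) S' = S}.
      coeffE M \<tau> S' * eval_mon ev (filter_mset (\<lambda>x. x \<in> dom ev) S'))"

definition beta_relevant :: "('q, 'a, 'b::linorder) repdata \<Rightarrow> 'b set \<Rightarrow> 'a \<times> 'b \<times> 'b \<Rightarrow> bool" where
  "beta_relevant M \<beta> \<tau> \<longleftrightarrow> \<tau> \<in> Rel3 M \<and>
     (\<exists>ev. min_pe M \<beta> ev \<and> (\<exists>S. mu_beta M ev \<tau> S \<noteq> 0))"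

definition coeffR :: "('q, 'a, 'b::linorder) repdata \<Rightarrow> 'a \<times> 'b \<times> 'b \<Rightarrow> ('b \<times> 'b) multiset \<Rightarrow> complex" where
  "coeffR M \<tau> m = (case \<tau> of (v, t, s) \<Rightarrow>
     (\<Sum>t' \<in> {t'. garrow M v s t' \<and> t < t' \<and> m = {#(t, t')#}}. coef M v s t')
   + (\<Sum>(s', t') \<in> {(s', t'). garrow M v s' t' \<and> t < t' \<and> s' < s \<and> m = {#(t, t'), (s', s)#}}. coef M v s' t')
   - (\<Sum>s' \<in> {s'. garrow M v s' t \<and> s' < s \<and> m = {#(s', s)#}}. coef M v s' t)
   - (if m = {#} \<and> garrow M v s t then coef M v s t else 0))"

definition monsR :: "('q, 'a, 'b::linorder) repdata \<Rightarrow> 'a \<times> 'b \<times> 'b \<Rightarrow> ('b \<times> 'b) multiset set" where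
  "monsR M \<tau> = {m. coeffR M \<tau> m \<noteq> 0}"

definition sbar_tvert :: "('q, 'a, 'b::linorder) repdata \<Rightarrow> 'a \<times> 'b \<times> 'b \<Rightarrow> bool" where
  "sbar_tvert M \<tau> \<longleftrightarrow> \<tau> \<in> Rel3 M \<and> (case \<tau> of (v, t, s) \<Rightarrow> \<not> extremal_arrow M v s t)"

definition sbar_pvert :: "('q, 'a, 'b::linorder) repdata \<Rightarrow> 'b \<times> 'b \<Rightarrow> bool" where
  "sbar_pvert M p \<longleftrightarrow> p \<in> Rel2 M \<and> fst p < snd p"

definition sbar_edge :: "('q, 'a, 'b::linorder) repdata \<Rightarrow> 'a \<times> 'b \<times> 'b \<Rightarrow> 'b \<times> 'b \<Rightarrow> bool" where
  "sbar_edge M \<tau> p \<longleftrightarrow> sbar_tvert M \<tau> \<and> sbar_pvert M p \<and> (\<exists>m \<in> monsR M \<tau>. p \<in># m)"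

definition simply_linked :: "('q, 'a, 'b::linorder) repdata \<Rightarrow> 'a \<times> 'b \<times> 'b \<Rightarrow> 'b \<times> 'b \<Rightarrow> bool" where
  "simply_linked M \<tau> p \<longleftrightarrow> sbar_edge M \<tau> p \<and> {#p#} \<in> monsR M \<tau> \<and>
     (\<forall>m \<in> monsR M \<tau>. p \<in># m \<longrightarrow> m = {#p#})"

definition extremal_edge :: "('q, 'a, 'b::linorder) repdata \<Rightarrow> 'a \<times> 'b \<times> 'b \<Rightarrow> 'b \<times> 'b \<Rightarrow> bool" where
  "extremal_edge M \<tau> p \<longleftrightarrow> (case \<tau> of (v, t, s) \<Rightarrow> case p of (i, j) \<Rightarrow>
     simply_linked M \<tau> p \<and>
     ((j = s \<and> extremal_arrow M v i t) \<or> (i = t \<and> extremal_arrow M v s j)))"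

end

theory Submission
  imports Defs
begin

text \<open>Part (1): an extremal edge at (v,t,s) is (i,s) with (v,i,t) extremal or (t,j) with (v,s,j)
extremal, and for fixed v an extremal arrow is determined by either endpoint.

Part (2): E(v,t,s) consists of quadratic terms w_{t,t'} w_{s',s} and linear terms w_{s',s}.
If s is not in beta, then f_beta kills every w_{s',s}; if t is in beta, then f_beta sets
w_{t,t'} to the Kronecker delta, and the surviving quadratic terms cancel the linear ones.
Either way all mu_{beta,lambda} vanish, so a beta-relevant triple has s in beta and t not in
beta. Finally, for an extremal arrow (v,x,y) one has E(v,y,x) = mu_{v,x,y} (w_{y,y} - 1) w_{x,x},
which takes the value -mu_{v,x,y} \<noteq> 0 under any extension of f_beta when x is in beta and
y is not.\<close>

lemma sum_collect_terms_diff: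
  fixes a :: "'k \<Rightarrow> 'r::comm_ring" and b :: "'l \<Rightarrow> 'r"
  assumes "finite K" "finite L"
    and F: "\<And>m. F m = (\<Sum>k\<in>{k\<in>K. f k = m}. a k) - (\<Sum>l\<in>{l\<in>L. g l = m}. b l)"
  shows "(\<Sum>m\<in>{m. F m \<noteq> 0 \<and> P m}. F m * h m)
       = (\<Sum>k\<in>{k\<in>K. P (f k)}. a k * h (f k)) - (\<Sum>l\<in>{l\<in>L. P (g l)}. b l * h (g l))"
proof -
  let ?U = "{m \<in> f ` K \<union> g ` L. P m}"
  have "finite ?U" using assms by auto
  have grouped: "(\<Sum>m\<in>?U. \<Sum>k\<in>{k\<in>X. e k = m}. c k * h (e k)) = (\<Sum>k\<in>{k\<in>X. P (e k)}. c k * h (e k))"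
    if "finite X" "e ` X \<subseteq> f ` K \<union> g ` L" for X e and c :: "'x \<Rightarrow> 'r"
  proof -
    have "(\<Sum>m\<in>?U. \<Sum>k\<in>{k\<in>X. e k = m}. c k * h (e k))
        = (\<Sum>m\<in>?U. \<Sum>k\<in>{k \<in> {k\<in>X. P (e k)}. e k = m}. c k * h (e k))"
      by (intro sum.cong) auto
    also have "\<dots> = (\<Sum>k\<in>{k\<in>X. P (e k)}. c k * h (e k))"
      using that \<open>finite ?U\<close> by (intro sum.group) auto
    finally show ?thesis .
  qed
  have "F m = 0" if "m \<notin> f ` K \<union> g ` L" for m
  proof -
    have "{k\<in>K. f k = m} = {}" "{l\<in>L. g l = m} = {}" using that by auto
    then show ?thesis unfolding F by (simp only: sum.empty) simp
  qed
  then have "(\<Sum>m\<in>{m. F m \<noteq> 0 \<and> P m}. F m * h m) = (\<Sum>m\<in>?U. F m * h m)"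
    using \<open>finite ?U\<close> by (intro sum.mono_neutral_left) auto
  also have "\<dots> = (\<Sum>m\<in>?U. \<Sum>k\<in>{k\<in>K. f k = m}. a k * h (f k))
                 - (\<Sum>m\<in>?U. \<Sum>l\<in>{l\<in>L. g l = m}. b l * h (g l))"
    by (simp add: F sum_distrib_right left_diff_distrib sum_subtractf[symmetric])
  finally show ?thesis
    using grouped[of K f a] grouped[of L g b] assms by simp
qed

definition quad_terms :: "('q, 'a, 'b::linorder) repdata \<Rightarrow> 'a \<Rightarrow> 'b \<Rightarrow> 'b \<Rightarrow> ('b \<times> 'b) set" where
  "quad_terms M v t s = {(s', t'). garrow M v s' t' \<and> (t, t') \<in> Rel2 M \<and> (s', s) \<in> Rel2 M}"

definition lin_terms :: "('q, 'a, 'b::linorder) repdata \<Rightarrow> 'a \<Rightarrow> 'b \<Rightarrow> 'b \<Rightarrow> 'b set" where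
  "lin_terms M v t s = {s'. garrow M v s' t \<and> (s', s) \<in> Rel2 M}"

definition quad_mon :: "'b \<Rightarrow> 'b \<Rightarrow> 'b \<times> 'b \<Rightarrow> ('b \<times> 'b) multiset" where
  "quad_mon t s k = {#(t, snd k), (fst k, s)#}"

lemma coeffE_eq:
  "coeffE M (v, t, s) m =
     (\<Sum>k\<in>{k\<in>quad_terms M v t s. quad_mon t s k = m}. coef M v (fst k) (snd k))
   - (\<Sum>s'\<in>{s'\<in>lin_terms M v t s. {#(s', s)#} = m}. coef M v s' t)"
proof -
  have "{(s', t'). garrow M v s' t' \<and> (t, t') \<in> Rel2 M \<and> (s', s) \<in> Rel2 M \<and> m = {#(t, t'), (s', s)#}}
      = {k\<in>quad_terms M v t s. quad_mon t s k = m}"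
    "{s'. garrow M v s' t \<and> (s', s) \<in> Rel2 M \<and> m = {#(s', s)#}} = {s'\<in>lin_terms M v t s. {#(s', s)#} = m}"
    unfolding quad_terms_def lin_terms_def quad_mon_def by auto
  then show ?thesis
    unfolding coeffE_def by (simp add: case_prod_beta')
qed

lemma finite_quad_terms: "wf_rep M \<Longrightarrow> finite (quad_terms M v t s)"
  by (rule finite_subset[of _ "basis M \<times> basis M"])
    (auto simp: quad_terms_def garrow_def wf_rep_def)

lemma finite_lin_terms: "wf_rep M \<Longrightarrow> finite (lin_terms M v t s)"
  by (rule finite_subset[of _ "basis M"]) (auto simp: lin_terms_def garrow_def wf_rep_def)

lemma sum_monsE_eq:
  assumes "wf_rep M"
  shows "(\<Sum>m\<in>{m\<in>monsE M (v, t, s). P m}. coeffE M (v, t, s) m * h m)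
       = (\<Sum>k\<in>{k\<in>quad_terms M v t s. P (quad_mon t s k)}. coef M v (fst k) (snd k) * h (quad_mon t s k))
       - (\<Sum>s'\<in>{s'\<in>lin_terms M v t s. P {#(s', s)#}}. coef M v s' t * h {#(s', s)#})"
proof -
  have "{m\<in>monsE M (v, t, s). P m} = {m. coeffE M (v, t, s) m \<noteq> 0 \<and> P m}"
    by (simp add: monsE_def)
  then show ?thesis
    using sum_collect_terms_diff[OF finite_quad_terms[OF assms] finite_lin_terms[OF assms] coeffE_eq]
    by simp
qed

lemma mu_beta_eq:
  assumes "wf_rep M"
  shows "mu_beta M ev (v, t, s) S =
     (\<Sum>k\<in>{k\<in>quad_terms M v t s. filter_mset (\<lambda>x. x \<notin> dom ev) (quad_mon t s k) = S}.
        coef M v (fst k) (snd k) * eval_mon ev (filter_mset (\<lambda>x. x \<in> dom ev) (quad_mon t s k)))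
   - (\<Sum>s'\<in>{s'\<in>lin_terms M v t s. filter_mset (\<lambda>x. x \<notin> dom ev) {#(s', s)#} = S}.
        coef M v s' t * eval_mon ev (filter_mset (\<lambda>x. x \<in> dom ev) {#(s', s)#}))"
  unfolding mu_beta_def by (rule sum_monsE_eq[OF assms])

lemma eval_mon_dom_eq_0:
  assumes "ev p = Some 0" "p \<in># m"
  shows "eval_mon ev (filter_mset (\<lambda>x. x \<in> dom ev) m) = 0"
  using assms by (force simp: eval_mon_def prod_mset_zero_iff)

lemma ev_col_notin_beta:
  "fbeta M \<beta> \<subseteq>\<^sub>m ev \<Longrightarrow> s \<notin> \<beta> \<Longrightarrow> (s', s) \<in> Rel2 M \<Longrightarrow> ev (s', s) = Some 0"
  by (auto simp: map_le_def fbeta_def dom_def)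

lemma ev_row_in_beta:
  "fbeta M \<beta> \<subseteq>\<^sub>m ev \<Longrightarrow> t \<in> \<beta> \<Longrightarrow> (t, t') \<in> Rel2 M \<Longrightarrow> ev (t, t') = Some (if t' = t then 1 else 0)"
  by (auto simp: map_le_def fbeta_def dom_def)

lemma mu_beta_eq_0_if_source_notin_beta:
  assumes "wf_rep M" "fbeta M \<beta> \<subseteq>\<^sub>m ev" "s \<notin> \<beta>"
  shows "mu_beta M ev (v, t, s) S = 0"
proof -
  have zero: "eval_mon ev (filter_mset (\<lambda>x. x \<in> dom ev) m) = 0"
    if "(s', s) \<in> Rel2 M" "(s', s) \<in># m" for s' m
    using eval_mon_dom_eq_0 ev_col_notin_beta[OF assms(2,3)] that by blast
  have "eval_mon ev (filter_mset (\<lambda>x. x \<in> dom ev) (quad_mon t s k)) = 0" if "k \<in> quad_terms M v t s" for k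
    using that by (intro zero[of "fst k"]) (auto simp: quad_terms_def quad_mon_def)
  moreover have "eval_mon ev (filter_mset (\<lambda>x. x \<in> dom ev) {#(s', s)#}) = 0" if "s' \<in> lin_terms M v t s" for s'
    using that by (intro zero) (auto simp: lin_terms_def)
  ultimately show ?thesis
    by (auto simp: mu_beta_eq[OF assms(1)] intro!: sum.neutral)
qed

lemma mu_beta_eq_0_if_target_in_beta:
  assumes "wf_rep M" "fbeta M \<beta> \<subseteq>\<^sub>m ev" "t \<in> \<beta>"
  shows "mu_beta M ev (v, t, s) S = 0"
proof -
  let ?P = "\<lambda>m. filter_mset (\<lambda>x. x \<notin> dom ev) m = S"
  let ?h = "\<lambda>m. eval_mon ev (filter_mset (\<lambda>x. x \<in> dom ev) m)"
  let ?Q = "quad_terms M v t s" and ?L = "lin_terms M v t s"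
  have ev_row: "ev (t, snd k) = Some (if snd k = t then 1 else 0)" if "k \<in> ?Q" for k
    using that ev_row_in_beta[OF assms(2,3)] by (auto simp: quad_terms_def)
  have quad_P: "{k\<in>?Q. ?P (quad_mon t s k)} = {k\<in>?Q. ?P {#(fst k, s)#}}"
    using ev_row by (auto simp: quad_mon_def domI)
  have quad_h: "?h (quad_mon t s k) = (if snd k = t then ?h {#(fst k, s)#} else 0)" if "k \<in> ?Q" for k
    using ev_row[OF that] by (simp add: quad_mon_def eval_mon_def domI)
  have diagonal: "{k\<in>?Q. ?P {#(fst k, s)#} \<and> snd k = t} = (\<lambda>s'. (s', t)) ` {s'\<in>?L. ?P {#(s', s)#}}"
    by (auto simp: quad_terms_def lin_terms_def Rel2_def garrow_def)
  have "(\<Sum>k\<in>{k\<in>?Q. ?P (quad_mon t s k)}. coef M v (fst k) (snd k) * ?h (quad_mon t s k))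
      = (\<Sum>k\<in>{k\<in>?Q. ?P {#(fst k, s)#}}. if snd k = t then coef M v (fst k) (snd k) * ?h {#(fst k, s)#} else 0)"
    unfolding quad_P using quad_h by (intro sum.cong) auto
  also have "\<dots> = (\<Sum>k\<in>{k\<in>?Q. ?P {#(fst k, s)#} \<and> snd k = t}. coef M v (fst k) (snd k) * ?h {#(fst k, s)#})"
    using finite_quad_terms[OF assms(1)] by (intro sum.mono_neutral_cong_right) auto
  also have "\<dots> = (\<Sum>s'\<in>{s'\<in>?L. ?P {#(s', s)#}}. coef M v s' t * ?h {#(s', s)#})"
    by (rule sum.reindex_cong[OF _ diagonal]) (auto simp: inj_on_def)
  finally show ?thesis
    by (simp add: mu_beta_eq[OF assms(1)])
qed

lemma beta_relevant_source_in_target_notin: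
  assumes "wf_rep M" "beta_relevant M \<beta> (v, t, s)"
  shows "s \<in> \<beta> \<and> t \<notin> \<beta>"
proof -
  obtain ev S where "min_pe M \<beta> ev" "mu_beta M ev (v, t, s) S \<noteq> 0"
    using assms(2) by (auto simp: beta_relevant_def)
  moreover from this have "fbeta M \<beta> \<subseteq>\<^sub>m ev" by (simp add: min_pe_def)
  ultimately show ?thesis
    using mu_beta_eq_0_if_source_notin_beta[OF assms(1)] mu_beta_eq_0_if_target_in_beta[OF assms(1)]
    by blast
qed

lemma extremal_arrow_le_imp_eq:
  "extremal_arrow M v s t \<Longrightarrow> garrow M v s' t' \<Longrightarrow> s' \<le> s \<Longrightarrow> t \<le> t' \<Longrightarrow> s' = s \<and> t' = t"
  unfolding extremal_arrow_def by (meson leD prod.inject)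

lemma extremal_arrow_unique_source:
  "extremal_arrow M v i t \<Longrightarrow> extremal_arrow M v i' t \<Longrightarrow> i = i'"
  by (metis extremal_arrow_def extremal_arrow_le_imp_eq nle_le)

lemma extremal_arrow_unique_target:
  "extremal_arrow M v s j \<Longrightarrow> extremal_arrow M v s j' \<Longrightarrow> j = j'"
  by (metis extremal_arrow_def extremal_arrow_le_imp_eq nle_le)

lemma coeffE_at_extremal_arrow:
  assumes "extremal_arrow M v x y"
  shows "coeffE M (v, y, x) m =
    (if {#(y, y), (x, x)#} = m then coef M v x y else 0) - (if {#(x, x)#} = m then coef M v x y else 0)"
proof -
  have xy: "garrow M v x y" "x \<in> basis M" "y \<in> basis M"
    using assms by (auto simp: extremal_arrow_def garrow_def)
  have "{k\<in>quad_terms M v y x. quad_mon y x k = m} = (if {#(y, y), (x, x)#} = m then {(x, y)} else {})"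
    using xy extremal_arrow_le_imp_eq[OF assms] by (auto simp: quad_terms_def quad_mon_def Rel2_def)
  moreover have "{s'\<in>lin_terms M v y x. {#(s', x)#} = m} = (if {#(x, x)#} = m then {x} else {})"
    using xy extremal_arrow_le_imp_eq[OF assms] by (auto simp: lin_terms_def Rel2_def)
  ultimately show ?thesis
    by (simp add: coeffE_eq)
qed

lemma monsE_at_extremal_arrow:
  "extremal_arrow M v x y \<Longrightarrow> monsE M (v, y, x) = {{#(y, y), (x, x)#}, {#(x, x)#}}"
  by (auto simp: monsE_def coeffE_at_extremal_arrow extremal_arrow_def garrow_def)

lemma evalE_at_extremal_arrow:
  assumes "extremal_arrow M v x y"
  shows "evalE M (v, y, x) ev = coef M v x y * (the (ev (y, y)) - 1) * the (ev (x, x))"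
  using assms
  by (simp add: evalE_def monsE_at_extremal_arrow coeffE_at_extremal_arrow eval_mon_def algebra_simps)

lemma extremal_arrow_target_in_beta:
  assumes "extremal_arrow M v x y" "is_pe M ev" "fbeta M \<beta> \<subseteq>\<^sub>m ev" "x \<in> \<beta>"
  shows "y \<in> \<beta>"
proof (rule ccontr)
  assume "y \<notin> \<beta>"
  have xy: "garrow M v x y" "x \<in> basis M" "y \<in> basis M" "coef M v x y \<noteq> 0"
    using assms(1) by (auto simp: extremal_arrow_def garrow_def)
  have "ev (x, x) = Some 1" "ev (y, y) = Some 0"
    using ev_row_in_beta[OF assms(3,4)] ev_col_notin_beta[OF assms(3) \<open>y \<notin> \<beta>\<close>] xy
    by (auto simp: Rel2_def)
  moreover have "(v, y, x) \<in> Rel3 M"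
    using xy(1) by (auto simp: Rel3_def garrow_def)
  moreover have "sig_edge M (v, y, x) (x, x)"
    using \<open>(v, y, x) \<in> Rel3 M\<close> xy by (auto simp: sig_edge_def Rel2_def monsE_at_extremal_arrow[OF assms(1)])
  moreover have "p \<in> {(y, y), (x, x)}" if "sig_edge M (v, y, x) p" for p
    using that by (auto simp: sig_edge_def monsE_at_extremal_arrow[OF assms(1)])
  ultimately have "evalE M (v, y, x) ev = 0"
    using assms(2) unfolding is_pe_def by blast
  then show False
    using xy \<open>ev (x, x) = Some 1\<close> \<open>ev (y, y) = Some 0\<close> by (simp add: evalE_at_extremal_arrow[OF assms(1)])
qed

lemma finite_card_le_1_if_subsingleton:
  assumes "\<And>a b. a \<in> A \<Longrightarrow> b \<in> A \<Longrightarrow> a = b"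
  shows "finite A \<and> card A \<le> 1"
proof (cases "A = {}")
  case False
  then obtain a where "A = {a}" using assms by blast
  then show ?thesis by simp
qed simp

lemma finite_card_extremal_edges:
  "finite {p. extremal_edge M (v, t, s) p} \<and> card {p. extremal_edge M (v, t, s) p} \<le> 2"
proof -
  let ?I = "{i. extremal_arrow M v i t}" and ?J = "{j. extremal_arrow M v s j}"
  have I: "finite ?I \<and> card ?I \<le> 1"
    by (rule finite_card_le_1_if_subsingleton) (auto intro: extremal_arrow_unique_source)
  have J: "finite ?J \<and> card ?J \<le> 1"
    by (rule finite_card_le_1_if_subsingleton) (auto intro: extremal_arrow_unique_target)
  have sub: "{p. extremal_edge M (v, t, s) p} \<subseteq> (\<lambda>i. (i, s)) ` ?I \<union> (\<lambda>j. (t, j)) ` ?J"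
    by (auto simp: extremal_edge_def)
  have "card {p. extremal_edge M (v, t, s) p} \<le> card ((\<lambda>i. (i, s)) ` ?I \<union> (\<lambda>j. (t, j)) ` ?J)"
    by (rule card_mono[OF _ sub]) (use I J in auto)
  also have "\<dots> \<le> card ?I + card ?J"
    using I J by (intro order.trans[OF card_Un_le] add_mono card_image_le) auto
  finally show ?thesis
    using I J finite_subset[OF sub] by auto
qed

theorem lemma2p25:
  fixes M :: "('q, 'a, 'b::linorder) repdata"
  assumes "wf_rep M"
  shows "(\<forall>\<tau>. sbar_tvert M \<tau> \<longrightarrow>
            finite {p. extremal_edge M \<tau> p} \<and> card {p. extremal_edge M \<tau> p} \<le> 2)
       \<and> (\<forall>\<beta> v t s i j. \<beta> \<subseteq> basis M \<longrightarrow> \<not> contradictory M \<beta> \<longrightarrow>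
            extremal_edge M (v, t, s) (i, j) \<longrightarrow> beta_relevant M \<beta> (v, t, s) \<longrightarrow>
            i \<notin> \<beta> \<and> j \<in> \<beta>)"
proof (rule conjI; intro allI impI)
  fix \<tau> :: "'a \<times> 'b \<times> 'b"
  show "finite {p. extremal_edge M \<tau> p} \<and> card {p. extremal_edge M \<tau> p} \<le> 2"
    using finite_card_extremal_edges by (metis prod_cases3)
next
  fix \<beta> v t s i j
  assume edge: "extremal_edge M (v, t, s) (i, j)" and relevant: "beta_relevant M \<beta> (v, t, s)"
  then obtain ev where ev: "is_pe M ev" "fbeta M \<beta> \<subseteq>\<^sub>m ev"
    by (auto simp: beta_relevant_def min_pe_def)
  have "s \<in> \<beta>" "t \<notin> \<beta>"
    using beta_relevant_source_in_target_notin[OF assms relevant] by auto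
  moreover have "(j = s \<and> extremal_arrow M v i t) \<or> (i = t \<and> extremal_arrow M v s j)"
    using edge by (simp add: extremal_edge_def)
  ultimately show "i \<notin> \<beta> \<and> j \<in> \<beta>"
    using extremal_arrow_target_in_beta[OF _ ev] by blast
qed

end
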